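(* Let $\mathcal X,\mathcal Y$ be nonempty convex compact sets and $\mathcal L:\mathcal X\times\mathcal Y\to\mathbb R$ a differentiable $(\mu_{\mathcal X},\mu_{\mathcal Y})$-uniformly strongly convex-concave function with saddle point $(x^*,y^* )$. Then for every $z\in\mathcal X\times\mathcal Y$, $$h(z)\le P_{\mathcal L}\sqrt{2w(z)},\qquad\text{and}\qquad P_{\mathcal L}\le\sqrt2\sup_{z\in\mathcal X\times\mathcal Y}\max\left\{\frac{\|\nabla_x\mathcal L(z)\|_{\mathcal X^*}}{\sqrt{\mu_{\mathcal X}}},\frac{\|\nabla_y\mathcal L(z)\|_{\mathcal Y^*}}{\sqrt{\mu_{\mathcal Y}}}\right\}.$$
   Context: Norms $\|\cdot\|_{\mathcal X},\|\cdot\|_{\mathcal Y}$ with dual norms $\|\cdot\|_{\mathcal X^*},\|\cdot\|_{\mathcal Y^*}$. $(\mu_{\mathcal X},\mu_{\mathcal Y})$-uniformly strongly convex-concave ($\mu_{\mathcal X},\mu_{\mathcal Y}>0$): $\mathcal L(\cdot,y)$ is $\mu_{\mathcal X}$-strongly convex w.r.t. $\|\cdot\|_{\mathcal X}$ for every $y$ and $-\mathcal L(x,\cdot)$ is $\mu_{\mathcal Y}$-strongly convex w.r.t. $\|\cdot\|_{\mathcal Y}$ for every $x$. Saddle point: $\mathcal L(x^*,y)\le\mathcal L(x^*,y^* )\le\mathcal L(x,y^* )$ for all $x,y$; $\mathcal L^*:=\mathcal L(x^*,y^* )$. For $z=(x,y)$: $h(z):=\max_{y'}\mathcal L(x,y')-\min_{x'}\mathcal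 L(x',y)$, $w(z):=\mathcal L(x,y^* )-\mathcal L(x^*,y)$. With $\hat y(x):=\arg\max_{y}\mathcal L(x,y)$ and $\hat x(y):=\arg\min_x\mathcal L(x,y)$: $P_{\mathcal X}:=\sup_{x\ne x^*}\frac{\langle\nabla_x\mathcal L(x,\hat y(x)),x-x^*\rangle}{\sqrt{\mathcal L(x,y^* )-\mathcal L^*}}$, $P_{\mathcal Y}:=\sup_{y\ne y^*}\frac{\langle\nabla_y\mathcal L(\hat x(y),y),y^*-y\rangle}{\sqrt{\mathcal L^*-\mathcal L(x^*,y)}}$, $P_{\mathcal L}:=\max\{P_{\mathcal X},P_{\mathcal Y}\}$. *)

theory Defs
  imports "HOL-Analysis.Analysis"
begin

definition is_norm :: "('a::euclidean_space \<Rightarrow> real) \<Rightarrow> bool" where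
  "is_norm N \<longleftrightarrow> (\<forall>u. 0 \<le> N u) \<and> (\<forall>u. N u = 0 \<longleftrightarrow> u = 0)
     \<and> (\<forall>c u. N (c *\<^sub>R u) = \<bar>c\<bar> * N u) \<and> (\<forall>u v. N (u + v) \<le> N u + N v)"

text \<open>Dual norm, the dual space being identified with the space via the inner product.\<close>
definition dual_norm :: "('a::euclidean_space \<Rightarrow> real) \<Rightarrow> 'a \<Rightarrow> real" where
  "dual_norm N g = Sup {g \<bullet> u | u. N u \<le> 1}"

definition strongly_convex_on ::
  "'a::euclidean_space set \<Rightarrow> ('a \<Rightarrow> real) \<Rightarrow> real \<Rightarrow> ('a \<Rightarrow> real) \<Rightarrow> bool" where
  "strongly_convex_on S N \<mu> f \<longleftrightarrow>
     (\<forall>x1\<in>S. \<forall>x2\<in>S. \<forall>t::real. 0 \<le> t \<and> t \<le> 1 \<longrightarrow>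
        f (t *\<^sub>R x1 + (1 - t) *\<^sub>R x2)
          \<le> t * f x1 + (1 - t) * f x2 - \<mu> / 2 * t * (1 - t) * (N (x1 - x2))\<^sup>2)"

definition yhat :: "'b set \<Rightarrow> ('a \<Rightarrow> 'b \<Rightarrow> real) \<Rightarrow> 'a \<Rightarrow> 'b" where
  "yhat Y L x = (THE y. y \<in> Y \<and> (\<forall>y'\<in>Y. L x y' \<le> L x y))"

definition xhat :: "'a set \<Rightarrow> ('a \<Rightarrow> 'b \<Rightarrow> real) \<Rightarrow> 'b \<Rightarrow> 'a" where
  "xhat X L y = (THE x. x \<in> X \<and> (\<forall>x'\<in>X. L x y \<le> L x' y))"

definition gap_h :: "'a set \<Rightarrow> 'b set \<Rightarrow> ('a \<Rightarrow> 'b \<Rightarrow> real) \<Rightarrow> 'a \<Rightarrow> 'b \<Rightarrow> real" where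
  "gap_h X Y L x y = (SUP y'\<in>Y. L x y') - (INF x'\<in>X. L x' y)"

definition gap_w :: "('a \<Rightarrow> 'b \<Rightarrow> real) \<Rightarrow> 'a \<Rightarrow> 'b \<Rightarrow> 'a \<Rightarrow> 'b \<Rightarrow> real" where
  "gap_w L xs ys x y = L x ys - L xs y"

text \<open>The constants \<open>P_X\<close>, \<open>P_Y\<close>, \<open>P_L\<close> (as extended reals; suprema may be infinite).
  \<open>Gx x y\<close>, \<open>Gy x y\<close> are the partial gradients \<open>\<nabla>\<^sub>xL(x,y)\<close>, \<open>\<nabla>\<^sub>yL(x,y)\<close>.\<close>
definition P_X :: "'a::euclidean_space set \<Rightarrow> 'b set \<Rightarrow> ('a \<Rightarrow> 'b \<Rightarrow> real)
    \<Rightarrow> ('a \<Rightarrow> 'b \<Rightarrow> 'a) \<Rightarrow> 'a \<Rightarrow> 'b \<Rightarrow> ereal" where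
  "P_X X Y L Gx xs ys = (SUP x\<in>X - {xs}.
      ereal ((Gx x (yhat Y L x) \<bullet> (x - xs)) / sqrt (L x ys - L xs ys)))"

definition P_Y :: "'a set \<Rightarrow> 'b::euclidean_space set \<Rightarrow> ('a \<Rightarrow> 'b \<Rightarrow> real)
    \<Rightarrow> ('a \<Rightarrow> 'b \<Rightarrow> 'b) \<Rightarrow> 'a \<Rightarrow> 'b \<Rightarrow> ereal" where
  "P_Y X Y L Gy xs ys = (SUP y\<in>Y - {ys}.
      ereal ((Gy (xhat X L y) y \<bullet> (ys - y)) / sqrt (L xs ys - L xs y)))"

definition P_L :: "'a::euclidean_space set \<Rightarrow> 'b::euclidean_space set \<Rightarrow> ('a \<Rightarrow> 'b \<Rightarrow> real)
    \<Rightarrow> ('a \<Rightarrow> 'b \<Rightarrow> 'a) \<Rightarrow> ('a \<Rightarrow> 'b \<Rightarrow> 'b) \<Rightarrow> 'a \<Rightarrow> 'b \<Rightarrow> ereal" where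
  "P_L X Y L Gx Gy xs ys = max (P_X X Y L Gx xs ys) (P_Y X Y L Gy xs ys)"

end

theory Submission
  imports Defs
begin

text \<open>For \<open>x \<noteq> x\<^sup>*\<close>, the gradient inequality for the convex function \<open>L(\<cdot>, \<^bold>\<hat>y(x))\<close> and
  \<open>L(x\<^sup>*, \<^bold>\<hat>y(x)) \<le> L\<^sup>*\<close> give \<open>max\<^sub>y L(x,y) - L\<^sup>* \<le> \<langle>\<nabla>\<^sub>xL(x, \<^bold>\<hat>y(x)), x - x\<^sup>*\<rangle> \<le> P\<^sub>X \<surd>(L(x,y\<^sup>*) - L\<^sup>*)\<close>,
  and symmetrically in \<open>y\<close>; adding the two bounds and using \<open>\<surd>a + \<surd>b \<le> \<surd>(2(a + b))\<close> gives
  \<open>h \<le> P\<^sub>L \<surd>(2w)\<close>. For the bound on \<open>P\<^sub>L\<close>, the numerator of the ratio defining \<open>P\<^sub>X\<close> is at most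
  \<open>\<parallel>\<nabla>\<^sub>xL\<parallel>\<^sub>* \<parallel>x - x\<^sup>*\<parallel>\<close>, while quadratic growth of the strongly convex \<open>L(\<cdot>, y\<^sup>*)\<close> at its minimiser
  \<open>x\<^sup>*\<close> gives \<open>L(x,y\<^sup>*) - L\<^sup>* \<ge> \<mu>\<^sub>X/2 \<parallel>x - x\<^sup>*\<parallel>\<^sup>2\<close>.\<close>

lemma is_normD:
  assumes "is_norm N"
  shows "0 \<le> N u" "N u = 0 \<longleftrightarrow> u = 0" "N (c *\<^sub>R u) = \<bar>c\<bar> * N u" "N (u + v) \<le> N u + N v"
  using assms unfolding is_norm_def by blast+

lemma is_norm_zero:
  assumes "is_norm N"
  shows "N 0 = 0"
  using is_normD(2)[OF assms] by blast

lemma is_norm_pos: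
  assumes "is_norm N" "u \<noteq> 0"
  shows "0 < N u"
  using is_normD(1,2)[OF assms(1), of u] assms(2) by linarith

lemma is_norm_uminus:
  assumes "is_norm N"
  shows "N (- u) = N u"
  using is_normD(3)[OF assms, of "-1" u] by simp

lemma convex_on_is_norm:
  assumes "is_norm N"
  shows "convex_on UNIV N"
proof
  fix t :: real and u v assume "0 < t" "t < 1"
  then show "N ((1 - t) *\<^sub>R u + t *\<^sub>R v) \<le> (1 - t) * N u + t * N v"
    using is_normD(3,4)[OF assms] by (metis abs_of_nonneg less_eq_real_def diff_ge_0_iff_ge)
qed simp

lemma is_norm_lower_bound:
  fixes N :: "'a::euclidean_space \<Rightarrow> real"
  assumes N: "is_norm N"
  obtains c where "0 < c" "\<And>u. c * norm u \<le> N u"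
proof -
  have "sphere (0::'a) 1 \<noteq> {}"
    using nonempty_Basis by (auto simp: norm_Basis)
  moreover have "continuous_on (sphere 0 1) N"
    using convex_on_continuous[OF open_UNIV convex_on_is_norm[OF N]] continuous_on_subset by blast
  ultimately obtain u0 where u0: "u0 \<in> sphere 0 1" "\<And>u. u \<in> sphere 0 1 \<Longrightarrow> N u0 \<le> N u"
    using continuous_attains_inf[OF compact_sphere] by blast
  have "N u0 * norm u \<le> N u" for u
  proof (cases "u = 0")
    case False
    have "N u0 \<le> N ((1 / norm u) *\<^sub>R u)" using False by (intro u0(2)) simp
    also have "\<dots> = N u / norm u" using is_normD(3)[OF N] by simp
    finally show ?thesis using False by (simp add: field_simps)
  qed (use is_normD(1)[OF N] in simp)
  moreover have "0 < N u0" using u0(1) by (intro is_norm_pos[OF N]) auto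
  ultimately show thesis using that by blast
qed

lemma dual_norm_inner_le:
  fixes N :: "'a::euclidean_space \<Rightarrow> real"
  assumes N: "is_norm N" and u: "N u \<le> 1"
  shows "g \<bullet> u \<le> dual_norm N g"
proof -
  obtain c where c: "0 < c" "\<And>u. c * norm u \<le> N u" using is_norm_lower_bound[OF N] by blast
  have "bdd_above {g \<bullet> u | u. N u \<le> 1}"
  proof (rule bdd_aboveI)
    fix r assume "r \<in> {g \<bullet> u | u. N u \<le> 1}"
    then obtain v where v: "r = g \<bullet> v" "N v \<le> 1" by blast
    have "norm v \<le> 1 / c" using c(2)[of v] v(2) c(1) by (simp add: field_simps)
    then have "norm g * norm v \<le> norm g * (1 / c)" by (rule mult_left_mono) simp
    then show "r \<le> norm g / c" using v(1) Cauchy_Schwarz_ineq2[of g v] by simp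
  qed
  then show ?thesis unfolding dual_norm_def using u by (intro cSup_upper) blast+
qed

lemma dual_norm_nonneg:
  assumes "is_norm N"
  shows "0 \<le> dual_norm N g"
  using dual_norm_inner_le[OF assms, of 0 g] is_norm_zero[OF assms] by simp

lemma inner_le_dual_norm_mult:
  assumes N: "is_norm N"
  shows "g \<bullet> u \<le> dual_norm N g * N u"
proof (cases "u = 0")
  case False
  then have pos: "0 < N u" by (rule is_norm_pos[OF N])
  have "g \<bullet> ((1 / N u) *\<^sub>R u) \<le> dual_norm N g"
    using pos is_normD(3)[OF N] by (intro dual_norm_inner_le[OF N]) simp
  then show ?thesis using pos by (simp add: field_simps)
qed (simp add: dual_norm_nonneg[OF N] is_norm_zero[OF N])

lemma dual_norm_uminus:
  assumes "is_norm N"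
  shows "dual_norm N (- g) = dual_norm N g"
proof -
  have "{- g \<bullet> u | u. N u \<le> 1} = {g \<bullet> u | u. N u \<le> 1}"
  proof (intro equalityI subsetI)
    fix r assume "r \<in> {- g \<bullet> u | u. N u \<le> 1}"
    then obtain u where "r = g \<bullet> (- u)" "N (- u) \<le> 1" by (auto simp: is_norm_uminus[OF assms])
    then show "r \<in> {g \<bullet> u | u. N u \<le> 1}" by blast
  next
    fix r assume "r \<in> {g \<bullet> u | u. N u \<le> 1}"
    then obtain u where "r = - g \<bullet> (- u)" "N (- u) \<le> 1" by (auto simp: is_norm_uminus[OF assms])
    then show "r \<in> {- g \<bullet> u | u. N u \<le> 1}" by blast
  qed
  then show ?thesis by (simp add: dual_norm_def)
qed

lemma strongly_convex_onD:
  assumes "strongly_convex_on S N \<mu> f" "x1 \<in> S" "x2 \<in> S" "0 \<le> t" "t \<le> 1"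
  shows "f (t *\<^sub>R x1 + (1 - t) *\<^sub>R x2)
          \<le> t * f x1 + (1 - t) * f x2 - \<mu> / 2 * t * (1 - t) * (N (x1 - x2))\<^sup>2"
  using assms unfolding strongly_convex_on_def by blast

lemma strongly_convex_on_segment_le:
  assumes "strongly_convex_on S N \<mu> f" "0 \<le> \<mu>" "x \<in> S" "z \<in> S" "0 \<le> t" "t \<le> 1"
  shows "f (x + t *\<^sub>R (z - x)) \<le> f x + t * (f z - f x)"
proof -
  have "f (x + t *\<^sub>R (z - x)) = f (t *\<^sub>R z + (1 - t) *\<^sub>R x)"
    by (simp add: algebra_simps)
  also have "\<dots> \<le> t * f z + (1 - t) * f x - \<mu> / 2 * t * (1 - t) * (N (z - x))\<^sup>2"
    by (rule strongly_convex_onD[OF assms(1,4,3,5,6)])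
  also have "\<dots> \<le> t * f z + (1 - t) * f x"
    using assms(2,5,6) by simp
  finally show ?thesis by (simp add: algebra_simps)
qed

text \<open>Since \<open>x\<close> may lie on the boundary of \<open>S\<close>, the derivative is only used along the segment
  towards \<open>z\<close>, as a one-sided limit of difference quotients.\<close>
lemma strongly_convex_on_gradient_ineq:
  fixes f :: "'a::euclidean_space \<Rightarrow> real"
  assumes sc: "strongly_convex_on S N \<mu> f" and "0 \<le> \<mu>" and x: "x \<in> S" and z: "z \<in> S"
    and f': "(f has_derivative (\<lambda>k. g \<bullet> k)) (at x)"
  shows "f x - f z \<le> g \<bullet> (x - z)"
proof -
  define \<phi> where "\<phi> t = f (x + t *\<^sub>R (z - x))" for t :: real
  have "((\<lambda>t::real. x + t *\<^sub>R (z - x)) has_derivative (\<lambda>t. t *\<^sub>R (z - x))) (at 0)"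
    by (auto intro!: derivative_eq_intros)
  moreover have "(f has_derivative (\<lambda>k. g \<bullet> k)) (at (x + 0 *\<^sub>R (z - x)))"
    using f' by simp
  ultimately have "(\<phi> has_derivative (\<lambda>t. g \<bullet> (t *\<^sub>R (z - x)))) (at 0)"
    unfolding \<phi>_def by (rule diff_chain_at[unfolded o_def])
  then have "(\<phi> has_derivative (\<lambda>t. (g \<bullet> (z - x)) * t)) (at 0)"
    by (simp add: mult.commute)
  then have "(\<phi> has_field_derivative g \<bullet> (z - x)) (at 0)"
    by (simp add: has_field_derivative_def)
  then have "((\<lambda>t. (\<phi> t - \<phi> 0) / t) \<longlongrightarrow> g \<bullet> (z - x)) (at 0)"
    by (simp add: DERIV_def)
  then have "((\<lambda>t. (\<phi> t - \<phi> 0) / t) \<longlongrightarrow> g \<bullet> (z - x)) (at_right 0)"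
    by (rule tendsto_mono[OF at_le, rotated]) simp
  moreover have "\<forall>\<^sub>F t in at_right 0. (\<phi> t - \<phi> 0) / t \<le> f z - f x"
    unfolding eventually_at_right_field
  proof (intro exI[of _ 1] conjI allI impI)
    fix t :: real assume "0 < t" "t < 1"
    then show "(\<phi> t - \<phi> 0) / t \<le> f z - f x"
      using strongly_convex_on_segment_le[OF sc \<open>0 \<le> \<mu>\<close> x z, of t]
      by (simp add: \<phi>_def divide_le_eq mult.commute)
  qed simp
  ultimately have "g \<bullet> (z - x) \<le> f z - f x"
    by (rule tendsto_le[OF trivial_limit_at_right_real tendsto_const])
  then show ?thesis by (simp add: inner_diff_right)
qed

lemma strongly_convex_on_quadratic_growth:
  fixes f :: "'a::euclidean_space \<Rightarrow> real"
  assumes sc: "strongly_convex_on S N \<mu> f" and "convex S" and x: "x \<in> S" and xs: "xs \<in> S"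
    and min: "\<And>z. z \<in> S \<Longrightarrow> f xs \<le> f z"
  shows "\<mu> / 2 * (N (x - xs))\<^sup>2 \<le> f x - f xs"
proof -
  define c where "c = \<mu> / 2 * (N (x - xs))\<^sup>2"
  have "\<forall>\<^sub>F t in at_right 0. c - (f x - f xs) \<le> t * c"
    unfolding eventually_at_right_field
  proof (intro exI[of _ 1] conjI allI impI)
    fix t :: real assume t: "0 < t" "t < 1"
    have "t *\<^sub>R x + (1 - t) *\<^sub>R xs \<in> S"
      using \<open>convex S\<close> x xs t by (simp add: convex_def)
    then have "f xs \<le> f (t *\<^sub>R x + (1 - t) *\<^sub>R xs)" by (rule min)
    also have "\<dots> \<le> t * f x + (1 - t) * f xs - t * (1 - t) * c"
      using strongly_convex_onD[OF sc x xs, of t] t by (simp add: c_def mult_ac)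
    finally have "t * (c - (f x - f xs)) \<le> t * (t * c)"
      by (simp add: algebra_simps)
    then show "c - (f x - f xs) \<le> t * c" using t by simp
  qed simp
  moreover have "((\<lambda>t. t * c) \<longlongrightarrow> 0 * c) (at_right 0)"
    by (intro tendsto_intros)
  ultimately have "c - (f x - f xs) \<le> 0 * c"
    by (intro tendsto_le[OF trivial_limit_at_right_real _ tendsto_const])
  then show ?thesis by (simp add: c_def)
qed

lemma strongly_convex_on_ex1_argmin:
  fixes f :: "'a::euclidean_space \<Rightarrow> real"
  assumes sc: "strongly_convex_on S N \<mu> f" and N: "is_norm N" and "0 < \<mu>"
    and "convex S" "compact S" "S \<noteq> {}" "continuous_on S f"
  shows "\<exists>!x. x \<in> S \<and> (\<forall>z\<in>S. f x \<le> f z)"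
proof (rule ex_ex1I)
  show "\<exists>x. x \<in> S \<and> (\<forall>z\<in>S. f x \<le> f z)"
    using continuous_attains_inf[OF \<open>compact S\<close> \<open>S \<noteq> {}\<close> \<open>continuous_on S f\<close>] by blast
next
  fix x1 x2 assume 1: "x1 \<in> S \<and> (\<forall>z\<in>S. f x1 \<le> f z)" and 2: "x2 \<in> S \<and> (\<forall>z\<in>S. f x2 \<le> f z)"
  then have "\<mu> / 2 * (N (x1 - x2))\<^sup>2 \<le> 0"
    using strongly_convex_on_quadratic_growth[OF sc \<open>convex S\<close>, of x1 x2] by force
  then have "N (x1 - x2) = 0" using \<open>0 < \<mu>\<close> by (simp add: mult_le_0_iff)
  then show "x1 = x2" using is_normD(2)[OF N] by simp
qed

lemma has_derivative_partial_fst: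
  assumes "(f has_derivative D) (at (x, y))"
  shows "((\<lambda>x'. f (x', y)) has_derivative (\<lambda>k. D (k, 0))) (at x)"
proof -
  have "((\<lambda>x'. (x', y)) has_derivative (\<lambda>k. (k, 0))) (at x)"
    by (auto intro!: derivative_eq_intros)
  from diff_chain_at[OF this] assms show ?thesis by (simp add: o_def)
qed

lemma has_derivative_partial_snd:
  assumes "(f has_derivative D) (at (x, y))"
  shows "((\<lambda>y'. f (x, y')) has_derivative (\<lambda>k. D (0, k))) (at y)"
proof -
  have "((\<lambda>y'. (x, y')) has_derivative (\<lambda>k. (0, k))) (at y)"
    by (auto intro!: derivative_eq_intros)
  from diff_chain_at[OF this] assms show ?thesis by (simp add: o_def)
qed

lemma sqrt_add_le_sqrt_double_add:
  fixes a b :: real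
  assumes "0 \<le> a" "0 \<le> b"
  shows "sqrt a + sqrt b \<le> sqrt (2 * (a + b))"
proof (rule real_le_rsqrt)
  have "2 * (sqrt a * sqrt b) \<le> (sqrt a)\<^sup>2 + (sqrt b)\<^sup>2"
    using sum_squares_bound[of "sqrt a" "sqrt b"] by (simp add: power2_eq_square)
  then show "(sqrt a + sqrt b)\<^sup>2 \<le> 2 * (a + b)" using assms by (simp add: power2_sum)
qed

lemma divide_sqrt_le_of_quadratic_growth:
  fixes c d n a \<mu> :: real
  assumes "c \<le> d * n" "\<mu> / 2 * n\<^sup>2 \<le> a" "0 < n" "0 < \<mu>" "0 \<le> d"
  shows "c / sqrt a \<le> sqrt 2 * (d / sqrt \<mu>)"
proof -
  have "sqrt (\<mu> / 2) * n = sqrt (\<mu> / 2 * n\<^sup>2)"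
    using assms(3) by (simp only: real_sqrt_mult real_sqrt_abs abs_of_pos)
  also have "\<dots> \<le> sqrt a"
    using assms(2) by (rule real_sqrt_le_mono)
  finally have "sqrt (\<mu> / 2) * n \<le> sqrt a" .
  moreover have pos: "0 < sqrt (\<mu> / 2) * n" using assms(3,4) by simp
  ultimately have "0 < sqrt a" by linarith
  then have "c / sqrt a \<le> d * n / sqrt a"
    using assms(1) by (simp add: divide_right_mono)
  also have "\<dots> \<le> d * n / (sqrt (\<mu> / 2) * n)"
    using assms(3,5) \<open>sqrt (\<mu> / 2) * n \<le> sqrt a\<close> pos \<open>0 < sqrt a\<close>
    by (intro divide_left_mono) simp_all
  also have "\<dots> = sqrt 2 * (d / sqrt \<mu>)"
    using assms(3,4) by (simp add: real_sqrt_divide field_simps)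
  finally show ?thesis .
qed

lemma ereal_add_le_mult_sqrt:
  fixes P :: ereal and A B a b :: real
  assumes "0 \<le> a" "0 \<le> b" "a + b = 0 \<or> 0 \<le> P"
    and A: "ereal A \<le> P * ereal (sqrt a)" and B: "ereal B \<le> P * ereal (sqrt b)"
  shows "ereal (A + B) \<le> P * ereal (sqrt (2 * (a + b)))"
proof (cases "a + b = 0")
  case True
  then have "a = 0" "b = 0" using assms(1,2) by linarith+
  then show ?thesis using A B by (simp add: zero_ereal_def[symmetric])
next
  case False
  with assms(3) have "0 \<le> P" by blast
  then show ?thesis
  proof (cases P)
    case (real p)
    with A B have "A + B \<le> p * (sqrt a + sqrt b)" by (simp add: distrib_left)
    also have "\<dots> \<le> p * sqrt (2 * (a + b))"
      using \<open>0 \<le> P\<close> real sqrt_add_le_sqrt_double_add[OF assms(1,2)] by (simp add: mult_left_mono)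
    finally show ?thesis using real by simp
  next
    case PInf
    then show ?thesis using False assms(1,2) by simp
  qed simp
qed

lemma yhat_uminus_swap: "yhat X (\<lambda>y x. - L x y) = xhat X L"
  by (simp add: yhat_def xhat_def fun_eq_iff)

lemma P_X_uminus_swap: "P_X Y X (\<lambda>y x. - L x y) (\<lambda>y x. - Gy x y) ys xs = P_Y X Y L Gy xs ys"
  by (simp add: P_X_def P_Y_def yhat_uminus_swap inner_diff_right)

locale strongly_convex_concave_saddle =
  fixes X :: "'a::euclidean_space set" and Y :: "'b::euclidean_space set"
    and NX :: "'a \<Rightarrow> real" and NY :: "'b \<Rightarrow> real"
    and L :: "'a \<Rightarrow> 'b \<Rightarrow> real"
    and Gx :: "'a \<Rightarrow> 'b \<Rightarrow> 'a" and Gy :: "'a \<Rightarrow> 'b \<Rightarrow> 'b"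
    and \<mu>X \<mu>Y :: real and xs :: 'a and ys :: 'b
  assumes X: "X \<noteq> {}" "convex X" "compact X"
    and Y: "Y \<noteq> {}" "convex Y" "compact Y"
    and NX: "is_norm NX" and NY: "is_norm NY"
    and \<mu>X: "0 < \<mu>X" and \<mu>Y: "0 < \<mu>Y"
    and has_derivative_x: "\<And>x y. x \<in> X \<Longrightarrow> y \<in> Y \<Longrightarrow>
      ((\<lambda>x'. L x' y) has_derivative (\<lambda>k. Gx x y \<bullet> k)) (at x)"
    and has_derivative_y: "\<And>x y. x \<in> X \<Longrightarrow> y \<in> Y \<Longrightarrow>
      ((\<lambda>y'. L x y') has_derivative (\<lambda>k. Gy x y \<bullet> k)) (at y)"
    and convex_x: "\<And>y. y \<in> Y \<Longrightarrow> strongly_convex_on X NX \<mu>X (\<lambda>x. L x y)"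
    and concave_y: "\<And>x. x \<in> X \<Longrightarrow> strongly_convex_on Y NY \<mu>Y (\<lambda>y. - L x y)"
    and xs: "xs \<in> X" and ys: "ys \<in> Y"
    and saddle: "\<And>x y. x \<in> X \<Longrightarrow> y \<in> Y \<Longrightarrow> L xs y \<le> L xs ys \<and> L xs ys \<le> L x ys"
begin

lemma yhat_best_response:
  assumes "x \<in> X"
  shows "yhat Y L x \<in> Y \<and> (\<forall>y\<in>Y. L x y \<le> L x (yhat Y L x))"
proof -
  have "continuous_on Y (\<lambda>y. - L x y)"
  proof (intro continuous_at_imp_continuous_on ballI continuous_minus)
    fix y assume "y \<in> Y"
    show "isCont (L x) y" using has_derivative_continuous[OF has_derivative_y[OF assms \<open>y \<in> Y\<close>]] .
  qed
  then have "\<exists>!y. y \<in> Y \<and> (\<forall>y'\<in>Y. - L x y \<le> - L x y')"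
    by (rule strongly_convex_on_ex1_argmin[OF concave_y[OF assms] NY \<mu>Y Y(2,3,1)])
  then have "\<exists>!y. y \<in> Y \<and> (\<forall>y'\<in>Y. L x y' \<le> L x y)" by simp
  then show ?thesis unfolding yhat_def by (rule theI')
qed

lemma best_response_gap_le_gradient:
  assumes "x \<in> X"
  shows "L x (yhat Y L x) - L xs ys \<le> Gx x (yhat Y L x) \<bullet> (x - xs)"
proof -
  let ?y = "yhat Y L x"
  have "?y \<in> Y" using yhat_best_response[OF assms] by blast
  then have "L x ?y - L xs ?y \<le> Gx x ?y \<bullet> (x - xs)"
    using \<mu>X assms by (intro strongly_convex_on_gradient_ineq[OF convex_x _ assms xs has_derivative_x]) simp_all
  then show ?thesis using saddle[OF xs \<open>?y \<in> Y\<close>] by linarith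
qed

lemma quadratic_growth_at_xs:
  assumes "x \<in> X"
  shows "\<mu>X / 2 * (NX (x - xs))\<^sup>2 \<le> L x ys - L xs ys"
  using strongly_convex_on_quadratic_growth[OF convex_x[OF ys] X(2) assms xs] saddle[OF _ ys] by blast

lemma gap_at_ys_pos:
  assumes "x \<in> X" "x \<noteq> xs"
  shows "0 < L x ys - L xs ys"
proof -
  have "0 < \<mu>X / 2 * (NX (x - xs))\<^sup>2" using is_norm_pos[OF NX, of "x - xs"] assms(2) \<mu>X by simp
  then show ?thesis using quadratic_growth_at_xs[OF assms(1)] by linarith
qed

lemma best_response_gap_le_P_X:
  assumes "x \<in> X"
  shows "ereal (L x (yhat Y L x) - L xs ys) \<le> P_X X Y L Gx xs ys * ereal (sqrt (L x ys - L xs ys))"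
proof (cases "x = xs")
  case True
  then have "L x (yhat Y L x) - L xs ys \<le> 0" using yhat_best_response[OF xs] saddle[OF xs] by auto
  with True show ?thesis by (simp add: zero_ereal_def[symmetric])
next
  case False
  define a where "a = L x ys - L xs ys"
  define r where "r = Gx x (yhat Y L x) \<bullet> (x - xs) / sqrt a"
  have "0 < a" unfolding a_def using gap_at_ys_pos[OF assms False] .
  then have "ereal (L x (yhat Y L x) - L xs ys) \<le> ereal r * ereal (sqrt a)"
    using best_response_gap_le_gradient[OF assms] by (simp add: r_def)
  also have "\<dots> \<le> P_X X Y L Gx xs ys * ereal (sqrt a)"
  proof (rule ereal_mult_right_mono)
    show "ereal r \<le> P_X X Y L Gx xs ys"
      unfolding P_X_def r_def a_def using assms False by (intro SUP_upper) auto
  qed (use \<open>0 < a\<close> in simp)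
  finally show ?thesis by (simp add: a_def)
qed

lemma P_X_nonneg:
  assumes "x \<in> X" "x \<noteq> xs"
  shows "0 \<le> P_X X Y L Gx xs ys"
proof -
  have "L x ys \<le> L x (yhat Y L x)" using yhat_best_response[OF assms(1)] ys by blast
  then have "0 < Gx x (yhat Y L x) \<bullet> (x - xs)"
    using best_response_gap_le_gradient[OF assms(1)] gap_at_ys_pos[OF assms] by linarith
  then have "0 \<le> ereal (Gx x (yhat Y L x) \<bullet> (x - xs) / sqrt (L x ys - L xs ys))"
    using gap_at_ys_pos[OF assms] by simp
  also have "\<dots> \<le> P_X X Y L Gx xs ys"
    unfolding P_X_def using assms by (intro SUP_upper) auto
  finally show ?thesis .
qed

lemma P_X_le:
  assumes C: "\<And>x y. x \<in> X \<Longrightarrow> y \<in> Y \<Longrightarrow> ereal (dual_norm NX (Gx x y) / sqrt \<mu>X) \<le> C"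
  shows "P_X X Y L Gx xs ys \<le> ereal (sqrt 2) * C"
  unfolding P_X_def
proof (rule SUP_least)
  fix x assume "x \<in> X - {xs}"
  then have x: "x \<in> X" "x \<noteq> xs" by auto
  let ?g = "Gx x (yhat Y L x)"
  have "ereal (?g \<bullet> (x - xs) / sqrt (L x ys - L xs ys)) \<le> ereal (sqrt 2 * (dual_norm NX ?g / sqrt \<mu>X))"
    unfolding ereal_less_eq by (rule divide_sqrt_le_of_quadratic_growth[OF inner_le_dual_norm_mult[OF NX]
          quadratic_growth_at_xs[OF x(1)] is_norm_pos[OF NX] \<mu>X dual_norm_nonneg[OF NX]])
      (use x in simp)
  also have "ereal (sqrt 2 * (dual_norm NX ?g / sqrt \<mu>X)) \<le> ereal (sqrt 2) * C"
    using ereal_mult_left_mono[OF C[OF x(1)], where c = "ereal (sqrt 2)"] yhat_best_response[OF x(1)] by simp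
  finally show "ereal (?g \<bullet> (x - xs) / sqrt (L x ys - L xs ys)) \<le> ereal (sqrt 2) * C" .
qed

text \<open>The \<open>y\<close>-side facts are the \<open>x\<close>-side facts of the saddle problem \<open>(y, x) \<mapsto> - L x y\<close>.\<close>
lemma swapped:
  "strongly_convex_concave_saddle Y X NY NX (\<lambda>y x. - L x y) (\<lambda>y x. - Gy x y) (\<lambda>y x. - Gx x y)
     \<mu>Y \<mu>X ys xs"
proof
  fix y x assume "y \<in> Y" "x \<in> X"
  show "((\<lambda>y'. - L x y') has_derivative (\<lambda>k. - Gy x y \<bullet> k)) (at y)"
    using has_derivative_minus[OF has_derivative_y[OF \<open>x \<in> X\<close> \<open>y \<in> Y\<close>]] by simp
  show "((\<lambda>x'. - L x' y) has_derivative (\<lambda>k. - Gx x y \<bullet> k)) (at x)"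
    using has_derivative_minus[OF has_derivative_x[OF \<open>x \<in> X\<close> \<open>y \<in> Y\<close>]] by simp
qed (use X Y NX NY \<mu>X \<mu>Y convex_x concave_y xs ys saddle in auto)

lemma xhat_best_response:
  assumes "y \<in> Y"
  shows "xhat X L y \<in> X \<and> (\<forall>x\<in>X. L (xhat X L y) y \<le> L x y)"
  using strongly_convex_concave_saddle.yhat_best_response[OF swapped assms] by (simp add: yhat_uminus_swap)

lemma best_response_gap_le_P_Y:
  assumes "y \<in> Y"
  shows "ereal (L xs ys - L (xhat X L y) y) \<le> P_Y X Y L Gy xs ys * ereal (sqrt (L xs ys - L xs y))"
  using strongly_convex_concave_saddle.best_response_gap_le_P_X[OF swapped assms]
  by (simp add: yhat_uminus_swap P_X_uminus_swap)

lemma P_Y_nonneg: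
  assumes "y \<in> Y" "y \<noteq> ys"
  shows "0 \<le> P_Y X Y L Gy xs ys"
  using strongly_convex_concave_saddle.P_X_nonneg[OF swapped assms] by (simp add: P_X_uminus_swap)

lemma P_Y_le:
  assumes C: "\<And>x y. x \<in> X \<Longrightarrow> y \<in> Y \<Longrightarrow> ereal (dual_norm NY (Gy x y) / sqrt \<mu>Y) \<le> C"
  shows "P_Y X Y L Gy xs ys \<le> ereal (sqrt 2) * C"
  using strongly_convex_concave_saddle.P_X_le[OF swapped, of C] C
  by (simp add: P_X_uminus_swap dual_norm_uminus[OF NY])

lemma gap_h_le_best_response_gaps:
  assumes "x \<in> X" "y \<in> Y"
  shows "gap_h X Y L x y \<le> (L x (yhat Y L x) - L xs ys) + (L xs ys - L (xhat X L y) y)"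
proof -
  have "(SUP y'\<in>Y. L x y') \<le> L x (yhat Y L x)"
    using yhat_best_response[OF assms(1)] Y(1) by (intro cSUP_least) auto
  moreover have "L (xhat X L y) y \<le> (INF x'\<in>X. L x' y)"
    using xhat_best_response[OF assms(2)] X(1) by (intro cINF_greatest) auto
  ultimately show ?thesis by (simp add: gap_h_def)
qed

lemma gap_h_le_P_L:
  assumes "x \<in> X" "y \<in> Y"
  shows "ereal (gap_h X Y L x y) \<le> P_L X Y L Gx Gy xs ys * ereal (sqrt (2 * gap_w L xs ys x y))"
proof -
  define P where "P = P_L X Y L Gx Gy xs ys"
  define a where "a = L x ys - L xs ys"
  define b where "b = L xs ys - L xs y"
  have "0 \<le> a" using saddle[OF assms] by (simp add: a_def)
  have "0 \<le> b" using saddle[OF assms] by (simp add: b_def)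
  have "P_X X Y L Gx xs ys * ereal (sqrt a) \<le> P * ereal (sqrt a)"
    using \<open>0 \<le> a\<close> unfolding P_def P_L_def by (intro ereal_mult_right_mono) simp_all
  with best_response_gap_le_P_X[OF assms(1), folded a_def]
  have gap_x: "ereal (L x (yhat Y L x) - L xs ys) \<le> P * ereal (sqrt a)"
    by (rule order.trans)
  have "P_Y X Y L Gy xs ys * ereal (sqrt b) \<le> P * ereal (sqrt b)"
    using \<open>0 \<le> b\<close> unfolding P_def P_L_def by (intro ereal_mult_right_mono) simp_all
  with best_response_gap_le_P_Y[OF assms(2), folded b_def]
  have gap_y: "ereal (L xs ys - L (xhat X L y) y) \<le> P * ereal (sqrt b)"
    by (rule order.trans)
  \<comment> \<open>\<open>P\<close> is \<open>-\<infinity>\<close> when \<open>X = {xs}\<close> and \<open>Y = {ys}\<close> (empty suprema).\<close>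
  have "a + b = 0 \<or> 0 \<le> P"
  proof (cases "x = xs \<and> y = ys")
    case False
    then show ?thesis
      using P_X_nonneg[OF assms(1)] P_Y_nonneg[OF assms(2)]
      by (auto simp: P_def P_L_def intro: max.coboundedI1 max.coboundedI2)
  qed (simp add: a_def b_def)
  from ereal_add_le_mult_sqrt[OF \<open>0 \<le> a\<close> \<open>0 \<le> b\<close> this gap_x gap_y]
  have "ereal (gap_h X Y L x y) \<le> P * ereal (sqrt (2 * (a + b)))"
    using gap_h_le_best_response_gaps[OF assms] by (metis ereal_less_eq(3) order.trans)
  then show ?thesis by (simp add: P_def a_def b_def gap_w_def)
qed

lemma P_L_le:
  "P_L X Y L Gx Gy xs ys \<le> ereal (sqrt 2) *
     (SUP z\<in>X \<times> Y. ereal (max (dual_norm NX (Gx (fst z) (snd z)) / sqrt \<mu>X)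
                                (dual_norm NY (Gy (fst z) (snd z)) / sqrt \<mu>Y)))"
  (is "_ \<le> _ * ?C")
proof -
  have "ereal (max (dual_norm NX (Gx x y) / sqrt \<mu>X) (dual_norm NY (Gy x y) / sqrt \<mu>Y)) \<le> ?C"
    if "x \<in> X" "y \<in> Y" for x y
    using that by (intro SUP_upper2[of "(x, y)"]) auto
  then show ?thesis
    unfolding P_L_def by (intro max.boundedI P_X_le P_Y_le) (auto intro: order.trans[rotated])
qed

end

theorem proposition15:
  fixes X :: "'a::euclidean_space set" and Y :: "'b::euclidean_space set"
    and NX :: "'a \<Rightarrow> real" and NY :: "'b \<Rightarrow> real"
    and L :: "'a \<Rightarrow> 'b \<Rightarrow> real"
    and Gx :: "'a \<Rightarrow> 'b \<Rightarrow> 'a" and Gy :: "'a \<Rightarrow> 'b \<Rightarrow> 'b"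
    and \<mu>X \<mu>Y :: real and xs :: 'a and ys :: 'b
  assumes "X \<noteq> {}" "convex X" "compact X"
    and "Y \<noteq> {}" "convex Y" "compact Y"
    and "is_norm NX" "is_norm NY"
    and "\<mu>X > 0" "\<mu>Y > 0"
    and diff: "\<And>x y. x \<in> X \<Longrightarrow> y \<in> Y \<Longrightarrow>
        ((\<lambda>p. L (fst p) (snd p)) has_derivative
          (\<lambda>h. Gx x y \<bullet> fst h + Gy x y \<bullet> snd h)) (at (x, y))"
    and "\<And>y. y \<in> Y \<Longrightarrow> strongly_convex_on X NX \<mu>X (\<lambda>x. L x y)"
    and "\<And>x. x \<in> X \<Longrightarrow> strongly_convex_on Y NY \<mu>Y (\<lambda>y. - L x y)"
    and "xs \<in> X" "ys \<in> Y"
    and "\<And>x y. x \<in> X \<Longrightarrow> y \<in> Y \<Longrightarrow> L xs y \<le> L xs ys \<and> L xs ys \<le> L x ys"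
  shows "(\<forall>x\<in>X. \<forall>y\<in>Y. ereal (gap_h X Y L x y)
            \<le> P_L X Y L Gx Gy xs ys * ereal (sqrt (2 * gap_w L xs ys x y)))
       \<and> P_L X Y L Gx Gy xs ys \<le> ereal (sqrt 2) *
          (SUP z\<in>X \<times> Y. ereal (max (dual_norm NX (Gx (fst z) (snd z)) / sqrt \<mu>X)
                                     (dual_norm NY (Gy (fst z) (snd z)) / sqrt \<mu>Y)))"
proof -
  interpret strongly_convex_concave_saddle X Y NX NY L Gx Gy \<mu>X \<mu>Y xs ys
  proof
    fix x y assume "x \<in> X" "y \<in> Y"
    show "((\<lambda>x'. L x' y) has_derivative (\<lambda>k. Gx x y \<bullet> k)) (at x)"
      using has_derivative_partial_fst[OF diff[OF \<open>x \<in> X\<close> \<open>y \<in> Y\<close>]] by simp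
    show "((\<lambda>y'. L x y') has_derivative (\<lambda>k. Gy x y \<bullet> k)) (at y)"
      using has_derivative_partial_snd[OF diff[OF \<open>x \<in> X\<close> \<open>y \<in> Y\<close>]] by simp
  qed (use assms in blast)+
  show ?thesis using gap_h_le_P_L P_L_le by blast
qed

end
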